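(* Let ${\cal G}$ be a closed graph, $1\le\nu\le\infty$, and let $f\in C^1_{\rm Dir}({\cal G})$ be split. Then $$\|\nabla f\|_1\ge \widetilde I_\nu({\cal G})\,\|f\|_{\nu'}.$$
   Context: A graph ${\cal G}$ consists of an undirected graph $(V,E)$ (multiple edges and self-loops allowed), edge lengths $\ell_e>0$, boundary vertices $\partial{\cal G}\subseteq V$, a vertex measure ${\cal V}$ (supported on $V$, ${\cal V}(v)>0$) and an edge measure ${\cal E}$ (zero on vertices, $a_e>0$ times Lebesgue measure on the interior of edge $e$); ${\cal G}$ is identified with its geometric realization (closed interval of length $\ell_e$ joining the endpoints of each $e$). Closed graph: finitely many vertices and edges and $\partial{\cal G}=\emptyset$. $C^1_{\rm Dir}({\cal G})$: continuous functions, uniformly continuously differentiable on each open edge, vanishing on $\partial{\cal G}$ (here all functions are of finite type since ${\cal G}$ is finite). $\|f\|_q$ is the $L^q({\cal V})$ norm, $\|\nabla f\|_1=\int|\nabla f|\,d{\cal E}$, $\nu'$ the dual exponent. $f$ is split if ${\cal V}(\{f>0\})\le {\cal V}({\cal G})/2$ and ${\cal V}(\{f<0\})\le{\cal V}({\cal G})/2$. For open $\Omega$ with finite boundary, ${\cal A}(\partial\Omega)=\sum_{x\in\partial\Omega\setminus V}a_{e(x)}+\sum_{v\in\partial\Omega\cap V}\sum_{e:\,v\in\overline{\Omega\cap e^\circ}}a_e$ ($e(x)$ the edge containing $x$, $e^\circ$ the open interior of $e$). $\Omega$ is admissible if open, with finite boundary, disjoint from $\partial{\cal G}$. $\widetilde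 I_\nu({\cal G})=\inf_{\Omega\text{ admissible}}{\cal A}(\partial\Omega)\min({\cal V}(\Omega),{\cal V}(\complement\Omega))^{(1/\nu)-1}$. *)

theory Defs
  imports "HOL-Analysis.Analysis"
begin

text \<open>Edges are abstract indices (so multiple edges and
self-loops are allowed); edge e joins src e to tgt e, has length len e and
edge weight wt e (the density a_e of the edge measure); vmeas is the vertex
measure; bverts are the boundary vertices.\<close>

record ('v, 'e) mgraph =
  verts  :: "'v set"
  edges  :: "'e set"
  src    :: "'e \<Rightarrow> 'v"
  tgt    :: "'e \<Rightarrow> 'v"
  len    :: "'e \<Rightarrow> real"
  wt     :: "'e \<Rightarrow> real"
  vmeas  :: "'v \<Rightarrow> real"
  bverts :: "'v set"

text \<open>Points of the geometric realization: a vertex, or an interior point of edge e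
at distance t (0 < t < len e) from src e.\<close>

datatype ('v, 'e) gpt = Vert 'v | EPt 'e real

definition gpoints :: "('v, 'e, 'z) mgraph_scheme \<Rightarrow> ('v, 'e) gpt set" where
  "gpoints G = Vert ` verts G \<union> {EPt e t | e t. e \<in> edges G \<and> 0 < t \<and> t < len G e}"

definition closed_graph :: "('v, 'e, 'z) mgraph_scheme \<Rightarrow> bool" where
  "closed_graph G \<longleftrightarrow> finite (verts G) \<and> finite (edges G) \<and> bverts G = {} \<and>
     (\<forall>e\<in>edges G. src G e \<in> verts G \<and> tgt G e \<in> verts G \<and> 0 < len G e \<and> 0 < wt G e) \<and>
     (\<forall>v\<in>verts G. 0 < vmeas G v)"

definition gnbhd :: "('v, 'e, 'z) mgraph_scheme \<Rightarrow> ('v, 'e) gpt \<Rightarrow> real \<Rightarrow> ('v, 'e) gpt set" where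
  "gnbhd G x eps = (case x of
      Vert v \<Rightarrow> {Vert v}
        \<union> {EPt e t | e t. e \<in> edges G \<and> src G e = v \<and> 0 < t \<and> t < eps \<and> t < len G e}
        \<union> {EPt e t | e t. e \<in> edges G \<and> tgt G e = v \<and> 0 < t \<and> len G e - eps < t \<and> t < len G e}
    | EPt e s \<Rightarrow> {EPt e t | t. 0 < t \<and> t < len G e \<and> \<bar>t - s\<bar> < eps})"

definition gopen :: "('v, 'e, 'z) mgraph_scheme \<Rightarrow> ('v, 'e) gpt set \<Rightarrow> bool" where
  "gopen G S \<longleftrightarrow> S \<subseteq> gpoints G \<and> (\<forall>x\<in>S. \<exists>eps>0. gnbhd G x eps \<subseteq> S)"

definition gclosure :: "('v, 'e, 'z) mgraph_scheme \<Rightarrow> ('v, 'e) gpt set \<Rightarrow> ('v, 'e) gpt set" where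
  "gclosure G S = {x \<in> gpoints G. \<forall>eps>0. gnbhd G x eps \<inter> S \<noteq> {}}"

definition ginterior :: "('v, 'e, 'z) mgraph_scheme \<Rightarrow> ('v, 'e) gpt set \<Rightarrow> ('v, 'e) gpt set" where
  "ginterior G S = {x \<in> S \<inter> gpoints G. \<exists>eps>0. gnbhd G x eps \<subseteq> S}"

definition gfrontier :: "('v, 'e, 'z) mgraph_scheme \<Rightarrow> ('v, 'e) gpt set \<Rightarrow> ('v, 'e) gpt set" where
  "gfrontier G S = gclosure G S - ginterior G S"

definition edge_interior :: "('v, 'e, 'z) mgraph_scheme \<Rightarrow> 'e \<Rightarrow> ('v, 'e) gpt set" where
  "edge_interior G e = {EPt e t | t. 0 < t \<and> t < len G e}"

definition vmeasure :: "('v, 'e, 'z) mgraph_scheme \<Rightarrow> ('v, 'e) gpt set \<Rightarrow> real" where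
  "vmeasure G S = (\<Sum>v\<in>{v \<in> verts G. Vert v \<in> S}. vmeas G v)"

definition pt_edge :: "('v, 'e) gpt \<Rightarrow> 'e" where
  "pt_edge x = (case x of EPt e t \<Rightarrow> e | Vert v \<Rightarrow> undefined)"

definition bdry_area :: "('v, 'e, 'z) mgraph_scheme \<Rightarrow> ('v, 'e) gpt set \<Rightarrow> real" where
  "bdry_area G \<Omega> =
     (\<Sum>x\<in>{x \<in> gfrontier G \<Omega>. x \<notin> Vert ` verts G}. wt G (pt_edge x))
   + (\<Sum>v\<in>{v \<in> verts G. Vert v \<in> gfrontier G \<Omega>}.
        \<Sum>e\<in>{e \<in> edges G. Vert v \<in> gclosure G (\<Omega> \<inter> edge_interior G e)}. wt G e)"

definition admissible :: "('v, 'e, 'z) mgraph_scheme \<Rightarrow> ('v, 'e) gpt set \<Rightarrow> bool" where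
  "admissible G \<Omega> \<longleftrightarrow> gopen G \<Omega> \<and> finite (gfrontier G \<Omega>) \<and> \<Omega> \<inter> Vert ` bverts G = {}"

definition inv_exp :: "ereal \<Rightarrow> real" where
  "inv_exp \<nu> = (if \<nu> = \<infinity> then 0 else 1 / real_of_ereal \<nu>)"

definition dual_exp :: "ereal \<Rightarrow> ereal" where
  "dual_exp \<nu> = (if \<nu> = 1 then \<infinity> else if \<nu> = \<infinity> then 1
                  else ereal (real_of_ereal \<nu> / (real_of_ereal \<nu> - 1)))"

definition iso_const :: "('v, 'e, 'z) mgraph_scheme \<Rightarrow> ereal \<Rightarrow> real" where
  "iso_const G \<nu> = (INF \<Omega>\<in>{\<Omega>. admissible G \<Omega> \<and> 0 < vmeasure G \<Omega> \<and> 0 < vmeasure G (gpoints G - \<Omega>)}.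
      bdry_area G \<Omega> * min (vmeasure G \<Omega>) (vmeasure G (gpoints G - \<Omega>)) powr (inv_exp \<nu> - 1))"

definition lq_norm :: "('v, 'e, 'z) mgraph_scheme \<Rightarrow> ereal \<Rightarrow> (('v, 'e) gpt \<Rightarrow> real) \<Rightarrow> real" where
  "lq_norm G q f = (if q = \<infinity> then Max (insert 0 ((\<lambda>v. \<bar>f (Vert v)\<bar>) ` verts G))
     else (\<Sum>v\<in>verts G. vmeas G v * \<bar>f (Vert v)\<bar> powr real_of_ereal q) powr (1 / real_of_ereal q))"

definition grad_norm1 :: "('v, 'e, 'z) mgraph_scheme \<Rightarrow> (('v, 'e) gpt \<Rightarrow> real) \<Rightarrow> real" where
  "grad_norm1 G f = (\<Sum>e\<in>edges G. wt G e *
       integral {0<..<len G e} (\<lambda>t. \<bar>deriv (\<lambda>s. f (EPt e s)) t\<bar>))"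

definition C1_Dir :: "('v, 'e, 'z) mgraph_scheme \<Rightarrow> (('v, 'e) gpt \<Rightarrow> real) \<Rightarrow> bool" where
  "C1_Dir G f \<longleftrightarrow>
     (\<forall>x\<in>gpoints G. \<forall>\<delta>>0. \<exists>eps>0. \<forall>y\<in>gnbhd G x eps. \<bar>f y - f x\<bar> < \<delta>) \<and>
     (\<forall>e\<in>edges G. \<exists>g'. (\<forall>t\<in>{0<..<len G e}. ((\<lambda>s. f (EPt e s)) has_real_derivative g' t) (at t))
                     \<and> uniformly_continuous_on {0<..<len G e} g') \<and>
     (\<forall>v\<in>bverts G. f (Vert v) = 0)"

definition split_fun :: "('v, 'e, 'z) mgraph_scheme \<Rightarrow> (('v, 'e) gpt \<Rightarrow> real) \<Rightarrow> bool" where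
  "split_fun G f \<longleftrightarrow> vmeasure G {x. f x > 0} \<le> vmeasure G (gpoints G) / 2 \<and>
                      vmeasure G {x. f x < 0} \<le> vmeasure G (gpoints G) / 2"

end

theory Submission
  imports Defs
begin

(* For a set S of vertices carrying at most half of the vertex measure, the star
   neighbourhood of S (S together with the half-edges pointing into S) is admissible and
   its frontier consists of the midpoints of the edges cut by S; testing the isoperimetric
   constant I on it gives  I * mu(S)^(1/nu') <= a(cut S).
   A layer-cake argument on the vertex values of f then bounds  I * |f|_(nu')  by the
   discrete variation  sum_e a_e |f(src e) - f(tgt e)|: lowering the top positive level M
   of f to the next level M' below it decreases the variation by exactly (M - M') a(cut S),
   and by Minkowski's inequality decreases the norm by at most (M - M') mu(S)^(1/nu'),
   where S is the top level set; negative values are handled through -f.  Finally every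
   edge term of the discrete variation is at most a_e times the integral of |f'| over the
   edge, by the fundamental theorem of calculus. *)

section \<open>Minkowski's inequality for weighted finite sums\<close>

lemma convex_on_powr_nonneg:
  fixes p :: real
  assumes "1 \<le> p"
  shows "convex_on {0..} (\<lambda>x. x powr p)"
proof
  have scaled: "(c * z) powr p \<le> c * z powr p" if "0 \<le> c" "c \<le> 1" "0 \<le> z" for c z :: real
  proof -
    have "c powr p \<le> c"
      using that assms powr_le_one_le[of c p] by (cases "c = 0") auto
    then show ?thesis using that by (simp add: powr_mult mult_right_mono)
  qed
  fix t x y :: real
  assume t: "0 < t" "t < 1" and xy: "x \<in> {0..}" "y \<in> {0..}"
  consider "x = 0" | "y = 0" | "0 < x" "0 < y" using xy by fastforce
  then show "((1 - t) *\<^sub>R x + t *\<^sub>R y) powr p \<le> (1 - t) * x powr p + t * y powr p"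
  proof cases
    case 1
    then show ?thesis using scaled[of t y] t xy by simp
  next
    case 2
    then show ?thesis using scaled[of "1 - t" x] t xy by simp
  next
    case 3
    then show ?thesis using convex_onD[OF powr_convex[OF assms], of t x y] t by simp
  qed
qed simp

lemma weighted_powr_sum_add_null:
  fixes A :: "'a set" and m a b :: "'a \<Rightarrow> real" and p :: real
  assumes "finite A" and "\<And>v. v \<in> A \<Longrightarrow> 0 \<le> m v" and "\<And>v. v \<in> A \<Longrightarrow> 0 \<le> a v"
    and "(\<Sum>v\<in>A. m v * a v powr p) = 0"
  shows "(\<Sum>v\<in>A. m v * (a v + b v) powr p) = (\<Sum>v\<in>A. m v * b v powr p)"
proof -
  have "\<forall>v\<in>A. m v * a v powr p = 0"
    using assms by (subst sum_nonneg_eq_0_iff[symmetric]) auto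
  then show ?thesis by (intro sum.cong) auto
qed

lemma weighted_minkowski_pos:
  fixes A :: "'a set" and m a b :: "'a \<Rightarrow> real" and p :: real
  assumes m: "\<And>v. v \<in> A \<Longrightarrow> 0 \<le> m v"
    and a: "\<And>v. v \<in> A \<Longrightarrow> 0 \<le> a v" and b: "\<And>v. v \<in> A \<Longrightarrow> 0 \<le> b v" and p: "1 \<le> p"
    and pos: "0 < (\<Sum>v\<in>A. m v * a v powr p)" "0 < (\<Sum>v\<in>A. m v * b v powr p)"
  shows "(\<Sum>v\<in>A. m v * (a v + b v) powr p) powr (1/p)
     \<le> (\<Sum>v\<in>A. m v * a v powr p) powr (1/p) + (\<Sum>v\<in>A. m v * b v powr p) powr (1/p)"
proof -
  define SA where "SA = (\<Sum>v\<in>A. m v * a v powr p)"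
  define SB where "SB = (\<Sum>v\<in>A. m v * b v powr p)"
  define Ua where "Ua = SA powr (1/p)"
  define Ub where "Ub = SB powr (1/p)"
  have Ua: "0 < Ua" "Ua powr p = SA" and Ub: "0 < Ub" "Ub powr p = SB"
    unfolding Ua_def Ub_def SA_def SB_def using pos p by (auto simp: powr_powr)
  define t where "t = Ub / (Ua + Ub)"
  have t: "0 \<le> t" "t \<le> 1" "1 - t = Ua / (Ua + Ub)"
    unfolding t_def using Ua Ub by (auto simp: field_simps)
  \<comment> \<open>\<open>(a + b) / (Ua + Ub)\<close> is a convex combination of \<open>a / Ua\<close> and \<open>b / Ub\<close>,
    whose weighted \<open>p\<close>-th power sums are both \<open>1\<close>.\<close>
  have pointwise: "m v * ((a v + b v) / (Ua + Ub)) powr p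
      \<le> (1 - t) * (m v * a v powr p / SA) + t * (m v * b v powr p / SB)" if v: "v \<in> A" for v
  proof -
    have "(1 - t) * (a v / Ua) = a v / (Ua + Ub)" "t * (b v / Ub) = b v / (Ua + Ub)"
      using Ua Ub unfolding t(3) by (simp_all add: t_def)
    then have "(a v + b v) / (Ua + Ub) = (1 - t) * (a v / Ua) + t * (b v / Ub)"
      by (simp add: add_divide_distrib)
    then have "((a v + b v) / (Ua + Ub)) powr p \<le> (1 - t) * (a v / Ua) powr p + t * (b v / Ub) powr p"
      using convex_onD[OF convex_on_powr_nonneg[OF p], of t "a v / Ua" "b v / Ub"] t a[OF v] b[OF v] Ua Ub
      by simp
    also have "\<dots> = (1 - t) * (a v powr p / SA) + t * (b v powr p / SB)"
      using a[OF v] b[OF v] Ua Ub by (simp add: powr_divide)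
    finally have "m v * ((a v + b v) / (Ua + Ub)) powr p
        \<le> m v * ((1 - t) * (a v powr p / SA) + t * (b v powr p / SB))"
      using m[OF v] by (rule mult_left_mono)
    then show ?thesis by (simp add: algebra_simps)
  qed
  have "(\<Sum>v\<in>A. m v * (a v + b v) powr p) / (Ua + Ub) powr p
      = (\<Sum>v\<in>A. m v * ((a v + b v) / (Ua + Ub)) powr p)"
    using a b Ua Ub by (simp add: powr_divide sum_divide_distrib)
  also have "\<dots> \<le> (\<Sum>v\<in>A. (1 - t) * (m v * a v powr p / SA) + t * (m v * b v powr p / SB))"
    using pointwise by (rule sum_mono)
  also have "\<dots> = (1 - t) * (SA / SA) + t * (SB / SB)"
    unfolding SA_def SB_def by (simp only: sum.distrib sum_divide_distrib sum_distrib_left)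
  also have "\<dots> = 1" using pos unfolding SA_def SB_def by simp
  finally have "(\<Sum>v\<in>A. m v * (a v + b v) powr p) \<le> (Ua + Ub) powr p"
    using Ua Ub by simp
  then have "(\<Sum>v\<in>A. m v * (a v + b v) powr p) powr (1/p) \<le> ((Ua + Ub) powr p) powr (1/p)"
    using p m a b by (intro powr_mono2) (auto intro!: sum_nonneg)
  also have "\<dots> = Ua + Ub" using Ua Ub p by (simp add: powr_powr)
  finally show ?thesis unfolding Ua_def Ub_def SA_def SB_def .
qed

lemma weighted_minkowski:
  fixes A :: "'a set" and m a b :: "'a \<Rightarrow> real" and p :: real
  assumes fin: "finite A" and m: "\<And>v. v \<in> A \<Longrightarrow> 0 \<le> m v"
    and a: "\<And>v. v \<in> A \<Longrightarrow> 0 \<le> a v" and b: "\<And>v. v \<in> A \<Longrightarrow> 0 \<le> b v" and p: "1 \<le> p"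
  shows "(\<Sum>v\<in>A. m v * (a v + b v) powr p) powr (1/p)
     \<le> (\<Sum>v\<in>A. m v * a v powr p) powr (1/p) + (\<Sum>v\<in>A. m v * b v powr p) powr (1/p)"
proof -
  have "0 \<le> (\<Sum>v\<in>A. m v * a v powr p)" "0 \<le> (\<Sum>v\<in>A. m v * b v powr p)"
    using m by (auto intro!: sum_nonneg)
  then consider "(\<Sum>v\<in>A. m v * a v powr p) = 0" | "(\<Sum>v\<in>A. m v * b v powr p) = 0"
    | "0 < (\<Sum>v\<in>A. m v * a v powr p)" "0 < (\<Sum>v\<in>A. m v * b v powr p)"
    by fastforce
  then show ?thesis
  proof cases
    case 1
    then show ?thesis using weighted_powr_sum_add_null[OF fin m a] by simp
  next
    case 2
    then show ?thesis using weighted_powr_sum_add_null[of A m b p a] fin m b by (simp add: add.commute)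
  next
    case 3
    then show ?thesis using weighted_minkowski_pos[of A m a b p] m a b p by blast
  qed
qed

section \<open>A Sobolev inequality for vertex values\<close>

definition cut_weight :: "('v, 'e, 'z) mgraph_scheme \<Rightarrow> 'v set \<Rightarrow> real" where
  "cut_weight G S = (\<Sum>e\<in>{e \<in> edges G. (src G e \<in> S) \<noteq> (tgt G e \<in> S)}. wt G e)"

definition vertex_variation :: "('v, 'e, 'z) mgraph_scheme \<Rightarrow> (('v, 'e) gpt \<Rightarrow> real) \<Rightarrow> real" where
  "vertex_variation G f = (\<Sum>e\<in>edges G. wt G e * \<bar>f (Vert (src G e)) - f (Vert (tgt G e))\<bar>)"

definition vertex_isoperimetric :: "('v, 'e, 'z) mgraph_scheme \<Rightarrow> real \<Rightarrow> real \<Rightarrow> bool" where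
  "vertex_isoperimetric G I r \<longleftrightarrow> (\<forall>S. S \<subseteq> verts G \<and> S \<noteq> {} \<and> 2 * sum (vmeas G) S \<le> sum (vmeas G) (verts G)
     \<longrightarrow> I * sum (vmeas G) S powr r \<le> cut_weight G S)"

definition nonzero_vertex_values :: "('v, 'e, 'z) mgraph_scheme \<Rightarrow> (('v, 'e) gpt \<Rightarrow> real) \<Rightarrow> real set" where
  "nonzero_vertex_values G f = (\<lambda>v. f (Vert v)) ` verts G - {0}"

lemma closed_graphD:
  assumes "closed_graph G"
  shows "finite (verts G)" "finite (edges G)" "bverts G = {}"
    and "\<And>e. e \<in> edges G \<Longrightarrow> src G e \<in> verts G \<and> tgt G e \<in> verts G \<and> 0 < len G e \<and> 0 < wt G e"
    and "\<And>v. v \<in> verts G \<Longrightarrow> 0 < vmeas G v"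
  using assms unfolding closed_graph_def by auto

lemma vertex_measure_pos:
  assumes "closed_graph G" "S \<subseteq> verts G" "S \<noteq> {}"
  shows "0 < sum (vmeas G) S"
  using assms closed_graphD[OF assms(1)] by (metis finite_subset subset_iff sum_pos)

lemma vertex_variation_nonneg: "closed_graph G \<Longrightarrow> 0 \<le> vertex_variation G f"
  unfolding vertex_variation_def by (auto dest: closed_graphD intro!: sum_nonneg)

lemma vertex_variation_uminus: "vertex_variation G (\<lambda>x. - f x) = vertex_variation G f"
  unfolding vertex_variation_def by (simp add: abs_minus_commute)

lemma lq_norm_nonneg: "finite (verts G) \<Longrightarrow> 0 \<le> lq_norm G q f"
  unfolding lq_norm_def by (auto simp: Max_ge_iff)

lemma lq_norm_uminus: "lq_norm G q (\<lambda>x. - f x) = lq_norm G q f"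
  unfolding lq_norm_def by simp

lemma lq_norm_eq_0:
  assumes "\<And>v. v \<in> verts G \<Longrightarrow> f (Vert v) = 0"
  shows "lq_norm G q f = 0"
proof -
  have "(\<lambda>v. \<bar>f (Vert v)\<bar>) ` verts G \<subseteq> {0}" using assms by auto
  then have zero: "insert 0 ((\<lambda>v. \<bar>f (Vert v)\<bar>) ` verts G) = {0}" by blast
  show ?thesis unfolding lq_norm_def zero using assms by simp
qed

lemma split_fun_uminus: "split_fun G f \<Longrightarrow> split_fun G (\<lambda>x. - f x)"
  unfolding split_fun_def by (simp add: neg_less_0_iff_less conj_commute)

lemma nonzero_vertex_values_uminus:
  "card (nonzero_vertex_values G (\<lambda>x. - f x)) = card (nonzero_vertex_values G f)"
proof -
  have "nonzero_vertex_values G (\<lambda>x. - f x) = uminus ` nonzero_vertex_values G f"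
    unfolding nonzero_vertex_values_def by auto
  then show ?thesis by (simp add: card_image)
qed

lemma vertex_variation_add_superlevel:
  assumes cg: "closed_graph G" and "0 \<le> \<delta>"
    and f: "\<And>v. v \<in> verts G \<Longrightarrow> f (Vert v) = g (Vert v) + (if v \<in> S then \<delta> else 0)"
    and superlevel: "\<And>u v. u \<in> verts G - S \<Longrightarrow> v \<in> S \<Longrightarrow> g (Vert u) \<le> g (Vert v)"
  shows "vertex_variation G f = vertex_variation G g + \<delta> * cut_weight G S"
proof -
  have "wt G e * \<bar>f (Vert (src G e)) - f (Vert (tgt G e))\<bar>
      = wt G e * \<bar>g (Vert (src G e)) - g (Vert (tgt G e))\<bar>
        + (if (src G e \<in> S) \<noteq> (tgt G e \<in> S) then \<delta> * wt G e else 0)" if e: "e \<in> edges G" for e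
  proof -
    have "src G e \<in> verts G" "tgt G e \<in> verts G" using closed_graphD(4)[OF cg e] by auto
    then have "\<bar>f (Vert (src G e)) - f (Vert (tgt G e))\<bar> = \<bar>g (Vert (src G e)) - g (Vert (tgt G e))\<bar>
        + (if (src G e \<in> S) \<noteq> (tgt G e \<in> S) then \<delta> else 0)"
      using f superlevel \<open>0 \<le> \<delta>\<close> by fastforce
    then show ?thesis by (simp add: algebra_simps)
  qed
  then have "vertex_variation G f = vertex_variation G g
      + (\<Sum>e\<in>edges G. if (src G e \<in> S) \<noteq> (tgt G e \<in> S) then \<delta> * wt G e else 0)"
    unfolding vertex_variation_def by (simp add: sum.distrib)
  also have "(\<Sum>e\<in>edges G. if (src G e \<in> S) \<noteq> (tgt G e \<in> S) then \<delta> * wt G e else 0)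
      = \<delta> * cut_weight G S"
    unfolding cut_weight_def using closed_graphD(2)[OF cg]
    by (simp add: sum.inter_filter[symmetric] sum_distrib_left)
  finally show ?thesis .
qed

text \<open>\<open>S \<noteq> {}\<close> matters for \<open>q = \<infinity>\<close>: then \<open>inv_exp q = 0\<close>, and \<open>0 powr 0 = 0\<close>.\<close>

lemma lq_norm_add_indicator_le:
  assumes cg: "closed_graph G" and q: "1 \<le> q" and S: "S \<subseteq> verts G" "S \<noteq> {}" and "0 \<le> \<delta>"
    and f: "\<And>v. v \<in> verts G \<Longrightarrow> \<bar>f (Vert v)\<bar> = \<bar>g (Vert v)\<bar> + (if v \<in> S then \<delta> else 0)"
  shows "lq_norm G q f \<le> lq_norm G q g + \<delta> * sum (vmeas G) S powr inv_exp q"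
proof (cases "q = \<infinity>")
  case True
  have fin: "finite (verts G)" using closed_graphD[OF cg] by simp
  have "Max (insert 0 ((\<lambda>v. \<bar>f (Vert v)\<bar>) ` verts G)) \<le> Max (insert 0 ((\<lambda>v. \<bar>g (Vert v)\<bar>) ` verts G)) + \<delta>"
    using fin f \<open>0 \<le> \<delta>\<close> by (auto simp: Max_ge_iff intro: add_increasing2)
  then show ?thesis
    using True vertex_measure_pos[OF cg S] unfolding lq_norm_def inv_exp_def by simp
next
  case False
  then obtain p where qp: "q = ereal p" and p: "1 \<le> p" using q by (cases q) auto
  have m: "\<And>v. v \<in> verts G \<Longrightarrow> 0 \<le> vmeas G v" using closed_graphD(5)[OF cg] less_imp_le by blast
  define b where "b v = (if v \<in> S then \<delta> else 0)" for v
  have "(\<Sum>v\<in>verts G. vmeas G v * b v powr p) = (\<Sum>v\<in>verts G. if v \<in> S then \<delta> powr p * vmeas G v else 0)"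
    unfolding b_def by (intro sum.cong) auto
  also have "\<dots> = \<delta> powr p * sum (vmeas G) S"
    using S closed_graphD(1)[OF cg] by (simp add: sum.If_cases Int_absorb1 sum_distrib_left)
  finally have "(\<Sum>v\<in>verts G. vmeas G v * b v powr p) powr (1/p) = \<delta> * sum (vmeas G) S powr (1/p)"
    using \<open>0 \<le> \<delta>\<close> p S m by (simp add: powr_mult powr_powr sum_nonneg subset_iff)
  moreover have "(\<Sum>v\<in>verts G. vmeas G v * \<bar>f (Vert v)\<bar> powr p) powr (1/p)
      \<le> (\<Sum>v\<in>verts G. vmeas G v * \<bar>g (Vert v)\<bar> powr p) powr (1/p)
        + (\<Sum>v\<in>verts G. vmeas G v * b v powr p) powr (1/p)"
    using weighted_minkowski[of "verts G" "vmeas G" "\<lambda>v. \<bar>g (Vert v)\<bar>" b p] closed_graphD(1)[OF cg] m p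
      \<open>0 \<le> \<delta>\<close> f unfolding b_def by simp
  ultimately show ?thesis using p unfolding lq_norm_def inv_exp_def qp by simp
qed

lemma finite_next_lower_level:
  fixes A :: "real set"
  assumes "finite A" "0 < M"
  obtains M' where "0 \<le> M'" "M' < M" "M' \<in> insert 0 A" "\<And>z. z \<in> A \<Longrightarrow> z < M \<Longrightarrow> z \<le> M'"
proof
  let ?L = "insert 0 {z \<in> A. z < M}"
  have "finite ?L" using assms(1) by simp
  then show "0 \<le> Max ?L" "Max ?L < M" "\<And>z. z \<in> A \<Longrightarrow> z < M \<Longrightarrow> z \<le> Max ?L"
    using assms(2) by auto
  have "Max ?L \<in> ?L" using \<open>finite ?L\<close> by (rule Max_in) simp
  then show "Max ?L \<in> insert 0 A" by blast
qed

lemma vmeasure_mono: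
  assumes "closed_graph G" "A \<subseteq> B"
  shows "vmeasure G A \<le> vmeasure G B"
  unfolding vmeasure_def using assms closed_graphD[OF assms(1)]
  by (intro sum_mono2) (auto intro: less_imp_le)

lemma vmeasure_gpoints: "vmeasure G (gpoints G) = sum (vmeas G) (verts G)"
proof -
  have "{v \<in> verts G. Vert v \<in> gpoints G} = verts G" unfolding gpoints_def by auto
  then show ?thesis unfolding vmeasure_def by simp
qed

text \<open>Here \<open>g\<close> lowers the top level of \<open>f\<close> to the next lower value of \<open>f\<close> (or to \<open>0\<close>),
  \<open>S\<close> is the top level set and \<open>\<delta>\<close> the height of the step.\<close>

lemma split_fun_lower_top_level:
  assumes cg: "closed_graph G" and sp: "split_fun G f" and v0: "v0 \<in> verts G" "0 < f (Vert v0)"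
  obtains g S \<delta> where "split_fun G g"
    "card (nonzero_vertex_values G g) < card (nonzero_vertex_values G f)"
    "S \<subseteq> verts G" "S \<noteq> {}" "2 * sum (vmeas G) S \<le> sum (vmeas G) (verts G)" "0 \<le> \<delta>"
    "vertex_variation G f = vertex_variation G g + \<delta> * cut_weight G S"
    "\<And>v. v \<in> verts G \<Longrightarrow> \<bar>f (Vert v)\<bar> = \<bar>g (Vert v)\<bar> + (if v \<in> S then \<delta> else 0)"
proof -
  let ?vals = "(\<lambda>v. f (Vert v)) ` verts G"
  have fin: "finite ?vals" using closed_graphD(1)[OF cg] by simp
  define M where "M = Max ?vals"
  have M: "M \<in> ?vals" "\<And>v. v \<in> verts G \<Longrightarrow> f (Vert v) \<le> M"
    unfolding M_def using fin v0(1) by (auto intro: Max_in)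
  have "0 < M" using M(2)[OF v0(1)] v0(2) by linarith
  obtain M' where M': "0 \<le> M'" "M' < M" "M' \<in> insert 0 ?vals"
    and gap: "\<And>z. z \<in> ?vals \<Longrightarrow> z < M \<Longrightarrow> z \<le> M'"
    using finite_next_lower_level[OF fin \<open>0 < M\<close>] by metis
  have gap_vertex: "f (Vert v) \<le> M'" if "v \<in> verts G" "f (Vert v) < M" for v
    using gap[OF imageI[OF that(1)]] that(2) .
  define S where "S = {v \<in> verts G. f (Vert v) = M}"
  define g where "g x = (if f x = M then M' else f x)" for x
  show thesis
  proof (rule that)
    have "{x. 0 < g x} \<subseteq> {x. 0 < f x}" "{x. g x < 0} = {x. f x < 0}"
      using M' \<open>0 < M\<close> unfolding g_def by auto
    then have "vmeasure G {x. 0 < g x} \<le> vmeasure G {x. 0 < f x}"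
      "vmeasure G {x. g x < 0} = vmeasure G {x. f x < 0}"
      using vmeasure_mono[OF cg] by auto
    then show "split_fun G g" using sp unfolding split_fun_def by linarith
    have "nonzero_vertex_values G g \<subseteq> nonzero_vertex_values G f - {M}"
      using M' \<open>0 < M\<close> unfolding nonzero_vertex_values_def g_def by auto
    moreover have "M \<in> nonzero_vertex_values G f"
      using M \<open>0 < M\<close> unfolding nonzero_vertex_values_def by auto
    moreover have "finite (nonzero_vertex_values G f)"
      using fin unfolding nonzero_vertex_values_def by simp
    ultimately show "card (nonzero_vertex_values G g) < card (nonzero_vertex_values G f)"
      by (meson card_Diff1_less card_mono finite_Diff le_less_trans)
    show "S \<subseteq> verts G" "S \<noteq> {}" unfolding S_def using M by auto
    have "sum (vmeas G) S \<le> vmeasure G {x. 0 < f x}"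
      unfolding vmeasure_def S_def using closed_graphD[OF cg] \<open>0 < M\<close>
      by (intro sum_mono2) (auto intro: less_imp_le)
    then show "2 * sum (vmeas G) S \<le> sum (vmeas G) (verts G)"
      using sp unfolding split_fun_def vmeasure_gpoints by linarith
    show step: "0 \<le> M - M'" using M' by simp
    show "vertex_variation G f = vertex_variation G g + (M - M') * cut_weight G S"
    proof (rule vertex_variation_add_superlevel[OF cg step])
      show "f (Vert v) = g (Vert v) + (if v \<in> S then M - M' else 0)" if "v \<in> verts G" for v
        using that unfolding g_def S_def by simp
      show "g (Vert u) \<le> g (Vert v)" if "u \<in> verts G - S" "v \<in> S" for u v
      proof -
        have "f (Vert u) < M" using M(2) that(1) unfolding S_def by force
        then show ?thesis using gap_vertex that unfolding g_def S_def by auto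
      qed
    qed
    show "\<And>v. v \<in> verts G \<Longrightarrow> \<bar>f (Vert v)\<bar> = \<bar>g (Vert v)\<bar> + (if v \<in> S then M - M' else 0)"
      using M' \<open>0 < M\<close> unfolding g_def S_def by auto
  qed
qed

lemma lq_norm_le_vertex_variation_lower_top_level:
  assumes cg: "closed_graph G" and q: "1 \<le> q" and iso: "vertex_isoperimetric G I (inv_exp q)"
    and "0 \<le> I" and f: "split_fun G f" "v \<in> verts G" "0 < f (Vert v)"
  obtains g where "split_fun G g" "card (nonzero_vertex_values G g) < card (nonzero_vertex_values G f)"
    "I * lq_norm G q g \<le> vertex_variation G g \<longrightarrow> I * lq_norm G q f \<le> vertex_variation G f"
proof -
  obtain g S \<delta> where g: "split_fun G g"
      "card (nonzero_vertex_values G g) < card (nonzero_vertex_values G f)"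
    and S: "S \<subseteq> verts G" "S \<noteq> {}" "2 * sum (vmeas G) S \<le> sum (vmeas G) (verts G)"
    and \<delta>: "0 \<le> \<delta>" and variation: "vertex_variation G f = vertex_variation G g + \<delta> * cut_weight G S"
    and abs_f: "\<And>v. v \<in> verts G \<Longrightarrow> \<bar>f (Vert v)\<bar> = \<bar>g (Vert v)\<bar> + (if v \<in> S then \<delta> else 0)"
    using split_fun_lower_top_level[OF cg f] by blast
  have "I * lq_norm G q f \<le> vertex_variation G f" if g_ineq: "I * lq_norm G q g \<le> vertex_variation G g"
  proof -
    have "I * lq_norm G q f \<le> I * (lq_norm G q g + \<delta> * sum (vmeas G) S powr inv_exp q)"
      using lq_norm_add_indicator_le[OF cg q S(1,2) \<delta> abs_f] \<open>0 \<le> I\<close> by (rule mult_left_mono)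
    also have "\<dots> = I * lq_norm G q g + \<delta> * (I * sum (vmeas G) S powr inv_exp q)"
      by (simp add: algebra_simps)
    also have "\<dots> \<le> vertex_variation G g + \<delta> * cut_weight G S"
      using g_ineq iso S \<delta> unfolding vertex_isoperimetric_def by (intro add_mono mult_left_mono) auto
    finally show ?thesis using variation by simp
  qed
  with g show thesis using that by blast
qed

lemma lq_norm_le_vertex_variation:
  assumes cg: "closed_graph G" and q: "1 \<le> q" and iso: "vertex_isoperimetric G I (inv_exp q)"
    and "split_fun G f"
  shows "I * lq_norm G q f \<le> vertex_variation G f"
proof (cases "I \<le> 0")
  case True
  then show ?thesis
    using lq_norm_nonneg[of G q f] vertex_variation_nonneg[OF cg, of f] closed_graphD(1)[OF cg]
    by (meson mult_nonpos_nonneg order_trans)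
next
  case False
  then have "0 \<le> I" by simp
  show ?thesis using \<open>split_fun G f\<close>
  proof (induction "card (nonzero_vertex_values G f)" arbitrary: f rule: less_induct)
    case less
    consider (pos) v where "v \<in> verts G" "0 < f (Vert v)" | (neg) v where "v \<in> verts G" "f (Vert v) < 0"
      | (zero) "\<And>v. v \<in> verts G \<Longrightarrow> f (Vert v) = 0"
      by (meson linorder_neqE_linordered_idom)
    then show ?case
    proof cases
      case pos
      obtain g where "split_fun G g" "card (nonzero_vertex_values G g) < card (nonzero_vertex_values G f)"
        "I * lq_norm G q g \<le> vertex_variation G g \<longrightarrow> I * lq_norm G q f \<le> vertex_variation G f"
        using lq_norm_le_vertex_variation_lower_top_level[OF cg q iso \<open>0 \<le> I\<close> less.prems pos] .
      then show ?thesis using less.hyps by blast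
    next
      case neg
      obtain g where "split_fun G g"
        "card (nonzero_vertex_values G g) < card (nonzero_vertex_values G (\<lambda>x. - f x))"
        "I * lq_norm G q g \<le> vertex_variation G g
          \<longrightarrow> I * lq_norm G q (\<lambda>x. - f x) \<le> vertex_variation G (\<lambda>x. - f x)"
        using lq_norm_le_vertex_variation_lower_top_level[OF cg q iso \<open>0 \<le> I\<close>
            split_fun_uminus[OF less.prems] neg(1)] neg(2) by auto
      then show ?thesis
        using less.hyps nonzero_vertex_values_uminus[of G f]
        by (simp add: lq_norm_uminus vertex_variation_uminus)
    next
      case zero
      then show ?thesis using lq_norm_eq_0[of G f q] vertex_variation_nonneg[OF cg, of f] by simp
    qed
  qed
qed

section \<open>Star neighbourhoods of vertex sets\<close>

definition star_nbhd :: "('v, 'e, 'z) mgraph_scheme \<Rightarrow> 'v set \<Rightarrow> ('v, 'e) gpt set" where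
  "star_nbhd G S = Vert ` S \<union> {EPt e \<tau> | e \<tau>. e \<in> edges G \<and> 0 < \<tau> \<and> \<tau> < len G e \<and>
      ((src G e \<in> S \<and> tgt G e \<in> S) \<or> (src G e \<in> S \<and> \<tau> < len G e / 2) \<or> (tgt G e \<in> S \<and> len G e / 2 < \<tau>))}"

definition cut_midpoints :: "('v, 'e, 'z) mgraph_scheme \<Rightarrow> 'v set \<Rightarrow> ('v, 'e) gpt set" where
  "cut_midpoints G S = (\<lambda>e. EPt e (len G e / 2)) ` {e \<in> edges G. (src G e \<in> S) \<noteq> (tgt G e \<in> S)}"

lemma obtain_radius_le_half_lengths:
  assumes "closed_graph G"
  obtains \<epsilon> :: real where "0 < \<epsilon>" "\<And>e. e \<in> edges G \<Longrightarrow> \<epsilon> \<le> len G e / 2"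
proof
  let ?R = "insert 1 ((\<lambda>e. len G e / 2) ` edges G)"
  have "finite ?R" using closed_graphD(2)[OF assms] by simp
  then show "0 < Min ?R" using closed_graphD(4)[OF assms] by auto
  show "Min ?R \<le> len G e / 2" if "e \<in> edges G" for e
    using \<open>finite ?R\<close> that by (intro Min_le) auto
qed

context
  fixes G :: "('v, 'e, 'z) mgraph_scheme" and S :: "'v set"
  assumes cg: "closed_graph G" and SV: "S \<subseteq> verts G"
begin

lemma star_nbhd_subset_gpoints: "star_nbhd G S \<subseteq> gpoints G"
  unfolding star_nbhd_def gpoints_def using SV by auto

lemma star_nbhd_interior:
  assumes x: "x \<in> star_nbhd G S"
  shows "\<exists>\<epsilon>>0. gnbhd G x \<epsilon> \<subseteq> star_nbhd G S"
proof (cases x)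
  case (Vert v)
  then have v: "v \<in> S" using x unfolding star_nbhd_def by auto
  obtain \<epsilon> where \<epsilon>: "0 < \<epsilon>" "\<And>e. e \<in> edges G \<Longrightarrow> \<epsilon> \<le> len G e / 2"
    using obtain_radius_le_half_lengths[OF cg] by blast
  have "gnbhd G x \<epsilon> \<subseteq> star_nbhd G S"
  proof
    fix y assume "y \<in> gnbhd G x \<epsilon>"
    then show "y \<in> star_nbhd G S"
      using \<epsilon>(2) v unfolding Vert gnbhd_def star_nbhd_def by (auto, fastforce+)
  qed
  then show ?thesis using \<epsilon>(1) by blast
next
  case (EPt e s)
  then have e: "e \<in> edges G" "0 < s" "s < len G e"
    and "(src G e \<in> S \<and> tgt G e \<in> S) \<or> (src G e \<in> S \<and> s < len G e / 2) \<or> (tgt G e \<in> S \<and> len G e / 2 < s)"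
    using x unfolding star_nbhd_def by auto
  then consider "src G e \<in> S" "tgt G e \<in> S" | "src G e \<in> S" "s < len G e / 2"
    | "tgt G e \<in> S" "len G e / 2 < s" by blast
  then show ?thesis
  proof cases
    case 1
    then show ?thesis by (intro exI[of _ 1]) (use e in \<open>auto simp: EPt gnbhd_def star_nbhd_def\<close>)
  next
    case 2
    then show ?thesis
      by (intro exI[of _ "len G e / 2 - s"]) (use e in \<open>auto simp: EPt gnbhd_def star_nbhd_def\<close>)
  next
    case 3
    then show ?thesis
      by (intro exI[of _ "s - len G e / 2"]) (use e in \<open>auto simp: EPt gnbhd_def star_nbhd_def\<close>)
  qed
qed

lemma star_nbhd_exterior:
  assumes x: "x \<in> gpoints G" "x \<notin> star_nbhd G S" "x \<notin> cut_midpoints G S"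
  shows "\<exists>\<epsilon>>0. gnbhd G x \<epsilon> \<inter> star_nbhd G S = {}"
proof (cases x)
  case (Vert v)
  then have v: "v \<notin> S" using x unfolding star_nbhd_def by auto
  obtain \<epsilon> where \<epsilon>: "0 < \<epsilon>" "\<And>e. e \<in> edges G \<Longrightarrow> \<epsilon> \<le> len G e / 2"
    using obtain_radius_le_half_lengths[OF cg] by blast
  have "y \<notin> star_nbhd G S" if "y \<in> gnbhd G x \<epsilon>" for y
    using that \<epsilon>(2) v unfolding Vert gnbhd_def star_nbhd_def by (auto, fastforce+)
  then show ?thesis using \<epsilon>(1) by blast
next
  case (EPt e s)
  then have e: "e \<in> edges G" "0 < s" "s < len G e"
    using x unfolding gpoints_def by auto
  have not_in: "\<not> ((src G e \<in> S \<and> tgt G e \<in> S) \<or> (src G e \<in> S \<and> s < len G e / 2)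
      \<or> (tgt G e \<in> S \<and> len G e / 2 < s))"
    using x e unfolding EPt star_nbhd_def by auto
  have not_mid: "(src G e \<in> S) \<noteq> (tgt G e \<in> S) \<Longrightarrow> s \<noteq> len G e / 2"
    using x e unfolding EPt cut_midpoints_def by auto
  consider "src G e \<in> S" "tgt G e \<notin> S" "len G e / 2 < s" | "src G e \<notin> S" "tgt G e \<in> S" "s < len G e / 2"
    | "src G e \<notin> S" "tgt G e \<notin> S"
    using not_in not_mid by fastforce
  then show ?thesis
  proof cases
    case 1
    then show ?thesis
      by (intro exI[of _ "s - len G e / 2"]) (use e in \<open>auto simp: EPt gnbhd_def star_nbhd_def\<close>)
  next
    case 2
    then show ?thesis
      by (intro exI[of _ "len G e / 2 - s"]) (use e in \<open>auto simp: EPt gnbhd_def star_nbhd_def\<close>)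
  next
    case 3
    then show ?thesis by (intro exI[of _ 1]) (use e in \<open>auto simp: EPt gnbhd_def star_nbhd_def\<close>)
  qed
qed

lemma gfrontier_star_nbhd: "gfrontier G (star_nbhd G S) \<subseteq> cut_midpoints G S"
proof
  fix x assume x: "x \<in> gfrontier G (star_nbhd G S)"
  then have "x \<in> gpoints G" "\<And>\<epsilon>. \<epsilon> > 0 \<Longrightarrow> gnbhd G x \<epsilon> \<inter> star_nbhd G S \<noteq> {}"
    and "x \<notin> ginterior G (star_nbhd G S)"
    unfolding gfrontier_def gclosure_def by auto
  moreover from this have "x \<notin> star_nbhd G S"
    using star_nbhd_interior star_nbhd_subset_gpoints unfolding ginterior_def by blast
  ultimately show "x \<in> cut_midpoints G S" using star_nbhd_exterior by blast
qed

lemma admissible_star_nbhd: "admissible G (star_nbhd G S)"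
proof -
  have "finite (cut_midpoints G S)" unfolding cut_midpoints_def using closed_graphD(2)[OF cg] by simp
  then show ?thesis
    unfolding admissible_def gopen_def
    using star_nbhd_subset_gpoints star_nbhd_interior finite_subset[OF gfrontier_star_nbhd]
      closed_graphD(3)[OF cg] by auto
qed

lemma bdry_area_star_nbhd_le: "bdry_area G (star_nbhd G S) \<le> cut_weight G S"
proof -
  have no_vertices: "{v \<in> verts G. Vert v \<in> gfrontier G (star_nbhd G S)} = {}"
    using gfrontier_star_nbhd unfolding cut_midpoints_def by auto
  have "(\<Sum>x\<in>{x \<in> gfrontier G (star_nbhd G S). x \<notin> Vert ` verts G}. wt G (pt_edge x))
      \<le> (\<Sum>x\<in>cut_midpoints G S. wt G (pt_edge x))"
    using gfrontier_star_nbhd closed_graphD(2,4)[OF cg]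
    by (intro sum_mono2) (auto simp: cut_midpoints_def pt_edge_def less_imp_le)
  also have "\<dots> = cut_weight G S"
    unfolding cut_midpoints_def cut_weight_def by (subst sum.reindex) (auto simp: inj_on_def pt_edge_def)
  finally show ?thesis unfolding bdry_area_def no_vertices by simp
qed

lemma vmeasure_star_nbhd: "vmeasure G (star_nbhd G S) = sum (vmeas G) S"
proof -
  have "{v \<in> verts G. Vert v \<in> star_nbhd G S} = S" using SV unfolding star_nbhd_def by auto
  then show ?thesis unfolding vmeasure_def by simp
qed

lemma vmeasure_compl_star_nbhd: "vmeasure G (gpoints G - star_nbhd G S) = sum (vmeas G) (verts G - S)"
proof -
  have "{v \<in> verts G. Vert v \<in> gpoints G - star_nbhd G S} = verts G - S"
    using SV unfolding star_nbhd_def gpoints_def by auto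
  then show ?thesis unfolding vmeasure_def by simp
qed

end

lemma bdry_area_nonneg:
  assumes cg: "closed_graph G"
  shows "0 \<le> bdry_area G \<Omega>"
proof -
  have w: "\<And>e. e \<in> edges G \<Longrightarrow> 0 \<le> wt G e" using closed_graphD(4)[OF cg] less_imp_le by blast
  have "0 \<le> wt G (pt_edge x)" if x: "x \<in> gfrontier G \<Omega>" "x \<notin> Vert ` verts G" for x
  proof -
    have "x \<in> gpoints G" using x(1) unfolding gfrontier_def gclosure_def by auto
    then obtain e \<tau> where "x = EPt e \<tau>" "e \<in> edges G" using x(2) unfolding gpoints_def by auto
    then show ?thesis using w by (simp add: pt_edge_def)
  qed
  then show ?thesis unfolding bdry_area_def using w
    by (intro add_nonneg_nonneg sum_nonneg) auto
qed

lemma vertex_isoperimetric_iso_const: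
  assumes cg: "closed_graph G"
  shows "vertex_isoperimetric G (iso_const G \<nu>) (1 - inv_exp \<nu>)"
  unfolding vertex_isoperimetric_def
proof (intro allI impI, elim conjE)
  fix S assume S: "S \<subseteq> verts G" "S \<noteq> {}" and small: "2 * sum (vmeas G) S \<le> sum (vmeas G) (verts G)"
  define ratio where "ratio \<Omega> =
    bdry_area G \<Omega> * min (vmeasure G \<Omega>) (vmeasure G (gpoints G - \<Omega>)) powr (inv_exp \<nu> - 1)" for \<Omega>
  define family where "family = {\<Omega>. admissible G \<Omega> \<and> 0 < vmeasure G \<Omega> \<and> 0 < vmeasure G (gpoints G - \<Omega>)}"
  define \<mu> where "\<mu> = sum (vmeas G) S"
  have "0 < \<mu>" unfolding \<mu>_def using vertex_measure_pos[OF cg S] .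
  have "sum (vmeas G) (verts G - S) = sum (vmeas G) (verts G) - \<mu>"
    unfolding \<mu>_def using closed_graphD(1)[OF cg] S(1) by (simp add: sum_diff)
  then have compl: "\<mu> \<le> vmeasure G (gpoints G - star_nbhd G S)"
    using small vmeasure_compl_star_nbhd[OF cg S(1)] unfolding \<mu>_def by linarith
  have star: "star_nbhd G S \<in> family" "vmeasure G (star_nbhd G S) = \<mu>"
    unfolding family_def using admissible_star_nbhd[OF cg S(1)] vmeasure_star_nbhd[OF cg S(1)]
      compl \<open>0 < \<mu>\<close> unfolding \<mu>_def by auto
  have "bdd_below (ratio ` family)"
    unfolding ratio_def using bdry_area_nonneg[OF cg] by (intro bdd_belowI[of _ 0]) auto
  then have "iso_const G \<nu> \<le> ratio (star_nbhd G S)"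
    unfolding iso_const_def ratio_def[symmetric] family_def[symmetric] using star(1) by (rule cINF_lower)
  also have "\<dots> = bdry_area G (star_nbhd G S) * \<mu> powr (inv_exp \<nu> - 1)"
    unfolding ratio_def star(2) using compl by simp
  finally have "iso_const G \<nu> * \<mu> powr (1 - inv_exp \<nu>)
      \<le> bdry_area G (star_nbhd G S) * \<mu> powr (inv_exp \<nu> - 1) * \<mu> powr (1 - inv_exp \<nu>)"
    by (rule mult_right_mono) simp
  also have "\<dots> = bdry_area G (star_nbhd G S)"
    using \<open>0 < \<mu>\<close> by (simp add: mult.assoc powr_add[symmetric])
  also have "\<dots> \<le> cut_weight G S" by (rule bdry_area_star_nbhd_le[OF cg S(1)])
  finally show "iso_const G \<nu> * sum (vmeas G) S powr (1 - inv_exp \<nu>) \<le> cut_weight G S"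
    unfolding \<mu>_def .
qed

section \<open>Vertex differences and edge gradients\<close>

lemma abs_diff_le_integral_abs_deriv:
  fixes \<phi> g' :: "real \<Rightarrow> real"
  assumes der: "\<And>\<tau>. \<tau> \<in> {0<..<L} \<Longrightarrow> (\<phi> has_real_derivative g' \<tau>) (at \<tau>)"
    and uc: "uniformly_continuous_on {0<..<L} g'" and ab: "0 < a" "a \<le> b" "b < L"
  shows "\<bar>\<phi> b - \<phi> a\<bar> \<le> integral {0<..<L} (\<lambda>\<tau>. \<bar>deriv \<phi> \<tau>\<bar>)"
proof -
  \<comment> \<open>The uniformly continuous derivative extends continuously to \<open>[0, L]\<close>, so \<open>\<bar>g'\<bar>\<close> is integrable.\<close>
  obtain h where "uniformly_continuous_on (closure {0<..<L}) h" and hg: "\<And>\<tau>. \<tau> \<in> {0<..<L} \<Longrightarrow> g' \<tau> = h \<tau>"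
    using uniformly_continuous_on_extension_on_closure[OF uc] by metis
  then have "continuous_on {0..L} h" using ab by (simp add: uniformly_continuous_imp_continuous)
  then have hint: "(\<lambda>\<tau>. \<bar>h \<tau>\<bar>) integrable_on {0..L}" by (intro integrable_continuous_real continuous_intros)
  have sub: "{a..b} \<subseteq> {0..L}" using ab by auto
  have "(g' has_integral (\<phi> b - \<phi> a)) {a..b}"
  proof (rule fundamental_theorem_of_calculus[OF ab(2)])
    fix x assume "x \<in> {a..b}"
    then have "x \<in> {0<..<L}" using ab by auto
    from der[OF this] show "(\<phi> has_vector_derivative g' x) (at x within {a..b})"
      by (simp add: has_real_derivative_iff_has_vector_derivative has_vector_derivative_at_within)
  qed
  moreover have "\<And>x. x \<in> {a..b} \<Longrightarrow> g' x = h x" using hg ab by auto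
  ultimately have hi: "(h has_integral (\<phi> b - \<phi> a)) {a..b}"
    using has_integral_eq by metis
  have "\<bar>\<phi> b - \<phi> a\<bar> = norm (integral {a..b} h)" using hi by (simp add: integral_unique)
  also have "\<dots> \<le> integral {a..b} (\<lambda>\<tau>. \<bar>h \<tau>\<bar>)"
    using hi integrable_on_subinterval[OF hint sub]
    by (intro integral_norm_bound_integral) (auto simp: has_integral_integrable)
  also have "\<dots> \<le> integral {0..L} (\<lambda>\<tau>. \<bar>h \<tau>\<bar>)"
    using integrable_on_subinterval[OF hint sub] hint sub by (intro integral_subset_le) auto
  also have "\<dots> = integral {0<..<L} (\<lambda>\<tau>. \<bar>h \<tau>\<bar>)" by (rule integral_open_interval_real)
  also have "\<dots> = integral {0<..<L} (\<lambda>\<tau>. \<bar>deriv \<phi> \<tau>\<bar>)"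
    using der hg by (intro integral_cong) (metis DERIV_imp_deriv)
  finally show ?thesis .
qed

lemma abs_diff_limits_le_integral_abs_deriv:
  fixes \<phi> g' :: "real \<Rightarrow> real"
  assumes L: "0 < L"
    and der: "\<And>\<tau>. \<tau> \<in> {0<..<L} \<Longrightarrow> (\<phi> has_real_derivative g' \<tau>) (at \<tau>)"
    and uc: "uniformly_continuous_on {0<..<L} g'"
    and A: "(\<phi> \<longlongrightarrow> A) (at_right 0)" and B: "(\<phi> \<longlongrightarrow> B) (at_left L)"
  shows "\<bar>A - B\<bar> \<le> integral {0<..<L} (\<lambda>\<tau>. \<bar>deriv \<phi> \<tau>\<bar>)"
proof -
  let ?K = "integral {0<..<L} (\<lambda>\<tau>. \<bar>deriv \<phi> \<tau>\<bar>)"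
  have bound: "\<bar>\<phi> b - A\<bar> \<le> ?K" if b: "0 < b" "b < L" for b
  proof (rule tendsto_upperbound)
    show "((\<lambda>a. \<bar>\<phi> b - \<phi> a\<bar>) \<longlongrightarrow> \<bar>\<phi> b - A\<bar>) (at_right 0)"
      by (intro tendsto_intros A)
    show "\<forall>\<^sub>F a in at_right 0. \<bar>\<phi> b - \<phi> a\<bar> \<le> ?K"
      unfolding eventually_at_right_field
      using b abs_diff_le_integral_abs_deriv[OF der uc] by (intro exI[of _ b]) auto
  qed (simp add: trivial_limit_at_right_real)
  have "\<bar>B - A\<bar> \<le> ?K"
  proof (rule tendsto_upperbound)
    show "((\<lambda>b. \<bar>\<phi> b - A\<bar>) \<longlongrightarrow> \<bar>B - A\<bar>) (at_left L)"
      by (intro tendsto_intros B)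
    show "\<forall>\<^sub>F b in at_left L. \<bar>\<phi> b - A\<bar> \<le> ?K"
      unfolding eventually_at_left_field using L bound by (intro exI[of _ 0]) auto
  qed (simp add: trivial_limit_at_left_real)
  then show ?thesis by (simp add: abs_minus_commute)
qed

context
  fixes G :: "('v, 'e, 'z) mgraph_scheme" and f :: "('v, 'e) gpt \<Rightarrow> real" and e :: 'e
  assumes cg: "closed_graph G" and C1: "C1_Dir G f" and e: "e \<in> edges G"
begin

lemma C1_Dir_tendsto_src: "((\<lambda>s. f (EPt e s)) \<longlongrightarrow> f (Vert (src G e))) (at_right 0)"
proof (rule tendstoI)
  fix \<delta> :: real assume "\<delta> > 0"
  moreover have "Vert (src G e) \<in> gpoints G" using closed_graphD(4)[OF cg e] unfolding gpoints_def by auto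
  ultimately obtain \<epsilon> where "\<epsilon> > 0" and \<epsilon>: "\<forall>y\<in>gnbhd G (Vert (src G e)) \<epsilon>. \<bar>f y - f (Vert (src G e))\<bar> < \<delta>"
    using C1 unfolding C1_Dir_def by blast
  have "EPt e s \<in> gnbhd G (Vert (src G e)) \<epsilon>" if "0 < s" "s < min \<epsilon> (len G e)" for s
    using that e unfolding gnbhd_def by auto
  then show "\<forall>\<^sub>F s in at_right 0. dist (f (EPt e s)) (f (Vert (src G e))) < \<delta>"
    unfolding eventually_at_right_field dist_real_def using \<epsilon> \<open>\<epsilon> > 0\<close> closed_graphD(4)[OF cg e]
    by (intro exI[of _ "min \<epsilon> (len G e)"]) auto
qed

lemma C1_Dir_tendsto_tgt: "((\<lambda>s. f (EPt e s)) \<longlongrightarrow> f (Vert (tgt G e))) (at_left (len G e))"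
proof (rule tendstoI)
  fix \<delta> :: real assume "\<delta> > 0"
  moreover have "Vert (tgt G e) \<in> gpoints G" using closed_graphD(4)[OF cg e] unfolding gpoints_def by auto
  ultimately obtain \<epsilon> where "\<epsilon> > 0" and \<epsilon>: "\<forall>y\<in>gnbhd G (Vert (tgt G e)) \<epsilon>. \<bar>f y - f (Vert (tgt G e))\<bar> < \<delta>"
    using C1 unfolding C1_Dir_def by blast
  have "EPt e s \<in> gnbhd G (Vert (tgt G e)) \<epsilon>" if "max (len G e - \<epsilon>) 0 < s" "s < len G e" for s
    using that e unfolding gnbhd_def by auto
  then show "\<forall>\<^sub>F s in at_left (len G e). dist (f (EPt e s)) (f (Vert (tgt G e))) < \<delta>"
    unfolding eventually_at_left_field dist_real_def using \<epsilon> \<open>\<epsilon> > 0\<close> closed_graphD(4)[OF cg e]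
    by (intro exI[of _ "max (len G e - \<epsilon>) 0"]) auto
qed

end

lemma vertex_variation_le_grad_norm1:
  assumes cg: "closed_graph G" and C1: "C1_Dir G f"
  shows "vertex_variation G f \<le> grad_norm1 G f"
  unfolding vertex_variation_def grad_norm1_def
proof (rule sum_mono)
  fix e assume e: "e \<in> edges G"
  obtain g' where der: "\<And>\<tau>. \<tau> \<in> {0<..<len G e} \<Longrightarrow> ((\<lambda>s. f (EPt e s)) has_real_derivative g' \<tau>) (at \<tau>)"
    and uc: "uniformly_continuous_on {0<..<len G e} g'"
    using C1 e unfolding C1_Dir_def by blast
  have "\<bar>f (Vert (src G e)) - f (Vert (tgt G e))\<bar>
      \<le> integral {0<..<len G e} (\<lambda>t. \<bar>deriv (\<lambda>s. f (EPt e s)) t\<bar>)"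
    using abs_diff_limits_le_integral_abs_deriv[OF _ der uc C1_Dir_tendsto_src[OF cg C1 e]
        C1_Dir_tendsto_tgt[OF cg C1 e]] closed_graphD(4)[OF cg e] by simp
  then show "wt G e * \<bar>f (Vert (src G e)) - f (Vert (tgt G e))\<bar>
      \<le> wt G e * integral {0<..<len G e} (\<lambda>t. \<bar>deriv (\<lambda>s. f (EPt e s)) t\<bar>)"
    using closed_graphD(4)[OF cg e] by (intro mult_left_mono) auto
qed

lemma one_le_dual_exp: "1 \<le> \<nu> \<Longrightarrow> 1 \<le> dual_exp \<nu>"
  by (cases \<nu>) (auto simp: dual_exp_def)

lemma inv_exp_dual_exp: "1 \<le> \<nu> \<Longrightarrow> inv_exp (dual_exp \<nu>) = 1 - inv_exp \<nu>"
  by (cases \<nu>) (auto simp: dual_exp_def inv_exp_def field_simps)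

theorem mainTheorem5:
  fixes G :: "('v, 'e) mgraph" and \<nu> :: ereal and f :: "('v, 'e) gpt \<Rightarrow> real"
  assumes "closed_graph G" and "1 \<le> \<nu>" and "C1_Dir G f" and "split_fun G f"
  shows "grad_norm1 G f \<ge> iso_const G \<nu> * lq_norm G (dual_exp \<nu>) f"
proof -
  have "vertex_isoperimetric G (iso_const G \<nu>) (inv_exp (dual_exp \<nu>))"
    using vertex_isoperimetric_iso_const[OF assms(1)] inv_exp_dual_exp[OF assms(2)] by simp
  then have "iso_const G \<nu> * lq_norm G (dual_exp \<nu>) f \<le> vertex_variation G f"
    by (rule lq_norm_le_vertex_variation[OF assms(1) one_le_dual_exp[OF assms(2)] _ assms(4)])
  also have "\<dots> \<le> grad_norm1 G f" using vertex_variation_le_grad_norm1[OF assms(1,3)] .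
  finally show ?thesis .
qed

end
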